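(* Let $a,b,c,d,P_{\max}>0$, and assume both frontier curves are convex, i.e. $Q_1\le0$ and $Q_2\le0$. Define the points $A=(0,\log_2(1+cP_{\max}))$ and $C=(\log_2(1+aP_{\max}),0)$, and let $\gamma=\log_2(1+cP_{\max})/\log_2(1+aP_{\max})$. Then operating via TDM is optimal, i.e. the convex hull of the power-control rate region equals the triangle with vertices $(0,0),A,C$, if $$\frac{(1+cP_{\max})(1+dP_{\max})}{1+cP_{\max}+dP_{\max}}\ \ge\ \left(\frac{1+aP_{\max}+bP_{\max}}{1+bP_{\max}}\right)^{\gamma}.$$ This inequality is equivalent to the point $B=(R_1(P_{\max},P_{\max}),R_2(P_{\max},P_{\max}))$ lying on or below the segment joining $A$ and $C$.
   Context: The channel power gains are normalized by the noise variance: $a$ (direct gain of user 1), $b$ (interference gain from transmitter 2 at receiver 1), $c$ (direct gain of user 2), $d$ (interference gain from transmitter 1 at receiver 2). The rates are $R_1(P_1,P_2)=\log_2\!\left(1+\frac{aP_1}{1+bP_2}\right)$ and $R_2(P_1,P_2)=\log_2\!\left(1+\frac{cP_2}{1+dP_1}\right)$, with $P_1,P_2\in[0,P_{\max}]$. The power-control rate region is $\{(r_1,r_2)\in\mathbb R^2_{\ge0}: \exists (P_1,P_2)\in[0,P_{\max}]^2,\ r_1\le R_1(P_1,P_2),\ r_2\le R_2(P_1,P_2)\}$. TDM (time division multiplexing) means time-sharing between $A$ (only user 2 transmits, at full power) and $C$ (only user 1 transmits, at full power). The thresholds are defined with $\alpha=d(1+bP_{\max})$ and $\beta=b(1+dP_{\max})$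 as $$Q_1=\frac{\Re\sqrt{(a-\alpha)(a-\alpha+acP_{\max})}-\alpha}{ad},\qquad Q_2=\frac{\Re\sqrt{(c-\beta)(c-\beta+acP_{\max})}-\beta}{cb}.$$ $Q_1\le 0$ means that the curve $\{(R_1(P_1,P_{\max}),R_2(P_1,P_{\max})):P_1\in[0,P_{\max}]\}$ is convex, viewed as the graph of $r_2$ as a function of $r_1$. $Q_2\le0$ means that the curve $\{(R_1(P_{\max},P_2),R_2(P_{\max},P_2)):P_2\in[0,P_{\max}]\}$ is convex. *)

theory Defs
  imports "HOL-Analysis.Analysis"
begin

definition R1 :: "real \<Rightarrow> real \<Rightarrow> real \<Rightarrow> real \<Rightarrow> real \<Rightarrow> real \<Rightarrow> real" where
  "R1 a b c d P1 P2 = log 2 (1 + a * P1 / (1 + b * P2))"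

definition R2 :: "real \<Rightarrow> real \<Rightarrow> real \<Rightarrow> real \<Rightarrow> real \<Rightarrow> real \<Rightarrow> real" where
  "R2 a b c d P1 P2 = log 2 (1 + c * P2 / (1 + d * P1))"

definition rate_region :: "real \<Rightarrow> real \<Rightarrow> real \<Rightarrow> real \<Rightarrow> real \<Rightarrow> (real \<times> real) set" where
  "rate_region a b c d Pmax = {(r1, r2). 0 \<le> r1 \<and> 0 \<le> r2 \<and>
     (\<exists>P1 P2. 0 \<le> P1 \<and> P1 \<le> Pmax \<and> 0 \<le> P2 \<and> P2 \<le> Pmax \<and>
        r1 \<le> R1 a b c d P1 P2 \<and> r2 \<le> R2 a b c d P1 P2)}"

definition Q1 :: "real \<Rightarrow> real \<Rightarrow> real \<Rightarrow> real \<Rightarrow> real \<Rightarrow> real" where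
  "Q1 a b c d Pmax = (let \<alpha> = d * (1 + b * Pmax) in
     (Re (csqrt (complex_of_real ((a - \<alpha>) * (a - \<alpha> + a * c * Pmax)))) - \<alpha>) / (a * d))"

definition Q2 :: "real \<Rightarrow> real \<Rightarrow> real \<Rightarrow> real \<Rightarrow> real \<Rightarrow> real" where
  "Q2 a b c d Pmax = (let \<beta> = b * (1 + d * Pmax) in
     (Re (csqrt (complex_of_real ((c - \<beta>) * (c - \<beta> + a * c * Pmax)))) - \<beta>) / (c * b))"

end

theory Submission
  imports Defs
begin

(* Measure rates in nats and write L1 = ln(1 + a P), L2 = ln(1 + c P) for the single-user
   rates at full power.  The convex hull of (0,0), A, C is the TDM triangle
   {r >= 0. r1/L1 + r2/L2 <= 1} (in bits, after rescaling by ln 2).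

   (1) Q1 <= 0 implies an explicit rational inequality between the channel gains, which
       makes the frontier curve P2 = Pmax convex when it is parametrised by the rate
       s = R1 of user 1: the derivative of R2 along the curve is increasing in s.
       Q2 <= 0 is the same statement with the users swapped.
   (2) Convexity bounds the frontier curve by the chord from A (s = 0) to its endpoint B;
       if B lies below the segment AC, so does the whole curve.  An arbitrary power pair
       with P1 <= P2 is dominated componentwise by a point on this curve (scale both powers
       up until P2 = Pmax), and the case P2 <= P1 is symmetric.  Hence the whole rate
       region lies in the TDM triangle.
   (3) The vertices of the triangle are achievable, so the convex hulls coincide; the
       stated powr inequality is just the condition "B below AC" after taking logarithms. *)

section \<open>The convexity condition encoded by Q1 and Q2\<close>

text \<open>A non-positive Q1 means the discriminant under the square root is at most the square
  of alpha, which unfolds to a linear comparison between the SNR parameters.\<close>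

lemma Q1_nonpos_imp_convexity_condition:
  fixes a b c d P :: real
  assumes "a > 0" "b > 0" "c > 0" "d > 0" "P > 0" "Q1 a b c d P \<le> 0"
  shows "(a / (1 + b * P)) * (1 + c * P) \<le> d * (2 + c * P)"
proof (rule ccontr)
  define \<alpha> where "\<alpha> = d * (1 + b * P)"
  define D where "D = (a - \<alpha>) * (a - \<alpha> + a * c * P)"
  have pb: "1 + b * P > 0" and \<alpha>_pos: "\<alpha> > 0"
    using assms by (simp_all add: \<alpha>_def add_pos_pos)
  assume "\<not> ?thesis"
  hence "d * (2 + c * P) * (1 + b * P) < a * (1 + c * P)"
    using pb by (simp add: not_le pos_less_divide_eq)
  hence "a * (1 + c * P) - \<alpha> * (2 + c * P) > 0"
    by (simp add: \<alpha>_def algebra_simps)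
  moreover have "D - \<alpha>\<^sup>2 = a * (a * (1 + c * P) - \<alpha> * (2 + c * P))"
    by (simp add: D_def algebra_simps power2_eq_square)
  ultimately have D_gt: "D > \<alpha>\<^sup>2"
    using assms(1) by (smt (verit) mult_pos_pos)
  have "Q1 a b c d P = (sqrt D - \<alpha>) / (a * d)"
    using D_gt le_less_trans[OF zero_le_power2 D_gt]
    unfolding Q1_def Let_def \<alpha>_def[symmetric] D_def[symmetric]
    by (simp add: csqrt_of_real)
  moreover have "sqrt D > \<alpha>"
    using D_gt \<alpha>_pos real_less_rsqrt by blast
  ultimately have "Q1 a b c d P > 0"
    using assms by simp
  with assms(6) show False by simp
qed

lemma Q2_eq_Q1_swapped: "Q2 a b c d P = Q1 c d a b P"
  by (simp add: Q1_def Q2_def Let_def mult.commute mult.left_commute)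

section \<open>Convexity of the frontier curve\<close>

text \<open>The rational function governing the slope of the frontier is antitone under the
  convexity condition.\<close>

lemma slope_ratio_antimono:
  fixes k c d P x y :: real
  assumes "k > 0" "c > 0" "d > 0" "P > 0" "k * (1 + c * P) \<le> d * (2 + c * P)"
    and "0 \<le> x" "x \<le> y"
  shows "(1 + k * y) / ((1 + d * y) * (1 + c * P + d * y))
       \<le> (1 + k * x) / ((1 + d * x) * (1 + c * P + d * x))"
proof -
  have "(1 + k * x) * ((1 + d * y) * (1 + c * P + d * y))
        - (1 + k * y) * ((1 + d * x) * (1 + c * P + d * x))
      = (y - x) * (d * (2 + c * P) - k * (1 + c * P) + d\<^sup>2 * (x + y) + k * d\<^sup>2 * x * y)"
    by (simp add: algebra_simps power2_eq_square)
  moreover have "0 \<le> (y - x) * (d * (2 + c * P) - k * (1 + c * P) + d\<^sup>2 * (x + y) + k * d\<^sup>2 * x * y)"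
    using assms by (intro mult_nonneg_nonneg) auto
  moreover have "(1 + d * y) * (1 + c * P + d * y) > 0" "(1 + d * x) * (1 + c * P + d * x) > 0"
    using assms by (auto intro!: mult_pos_pos add_pos_nonneg)
  ultimately show ?thesis
    by (simp add: divide_simps)
qed

lemma interfered_rate_deriv:
  fixes c P d x :: real
  assumes "1 + d * x > 0" "c * P > 0"
  shows "((\<lambda>x. ln (1 + c * P / (1 + d * x))) has_real_derivative
           - (c * P * d) / ((1 + d * x) * (1 + c * P + d * x))) (at x)"
proof -
  have "1 + c * P / (1 + d * x) > 0" "1 + c * P + d * x > 0"
    using assms by (simp_all add: add_pos_pos)
  moreover have "(1 + c * P / (1 + d * x)) * (1 + d * x) = 1 + c * P + d * x"
    using assms by (simp add: field_simps)
  ultimately show ?thesis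
    using assms by (auto intro!: derivative_eq_intros)
qed

lemma frontier_rate_convex:
  fixes k c d P :: real
  assumes k: "k > 0" and c: "c > 0" and d: "d > 0" and P: "P > 0"
    and cond: "k * (1 + c * P) \<le> d * (2 + c * P)"
  shows "convex_on {0..} (\<lambda>s. ln (1 + c * P / (1 + d * ((exp s - 1) / k))))"
proof -
  define X where "X s = (exp s - 1) / k" for s
  define h where "h x = (1 + k * x) / ((1 + d * x) * (1 + c * P + d * x))" for x
  have X_nonneg: "s \<ge> 0 \<Longrightarrow> X s \<ge> 0" for s
    using k by (simp add: X_def)
  have X_mono: "s \<le> t \<Longrightarrow> X s \<le> X t" for s t
    using k by (simp add: X_def divide_right_mono)
  have deriv: "((\<lambda>s. ln (1 + c * P / (1 + d * X s))) has_real_derivative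
                 - (c * P * d / k) * h (X s)) (at s)" if "s \<in> {0..}" for s
  proof -
    have "1 + d * X s > 0"
      using that X_nonneg d by (simp add: add_pos_nonneg)
    hence inner: "((\<lambda>x. ln (1 + c * P / (1 + d * x))) has_real_derivative
                    - (c * P * d) / ((1 + d * X s) * (1 + c * P + d * X s))) (at (X s))"
      using c P by (intro interfered_rate_deriv) auto
    have "(X has_real_derivative exp s / k) (at s)"
      unfolding X_def using k by (auto intro!: derivative_eq_intros)
    from DERIV_chain2[OF inner this] show ?thesis
      using k by (simp add: h_def X_def field_simps)
  qed
  have "- (c * P * d / k) * h (X s) \<le> - (c * P * d / k) * h (X t)"
    if "s \<in> {0..}" "t \<in> {0..}" "s \<le> t" for s t
  proof -
    have "h (X t) \<le> h (X s)"
      unfolding h_def using that X_nonneg X_mono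
      by (intro slope_ratio_antimono[OF k c d P cond]) auto
    moreover have "c * P * d / k > 0"
      using k c d P by simp
    ultimately have "(c * P * d / k) * h (X t) \<le> (c * P * d / k) * h (X s)"
      by (intro mult_left_mono) auto
    thus ?thesis
      by simp
  qed
  with deriv have "convex_on {0..} (\<lambda>s. ln (1 + c * P / (1 + d * X s)))"
    by (intro convex_on_realI[where f' = "\<lambda>s. - (c * P * d / k) * h (X s)"]) auto
  thus ?thesis
    by (simp add: X_def)
qed

lemma frontier_below_chord:
  fixes k c d P l1 x :: real
  assumes k: "k > 0" and c: "c > 0" and d: "d > 0" and P: "P > 0" and l1: "l1 > 0"
    and cond: "k * (1 + c * P) \<le> d * (2 + c * P)"
    and endpoint: "ln (1 + k * P) / l1 + ln (1 + c * P / (1 + d * P)) / ln (1 + c * P) \<le> 1"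
    and x: "0 \<le> x" "x \<le> P"
  shows "ln (1 + k * x) / l1 + ln (1 + c * P / (1 + d * x)) / ln (1 + c * P) \<le> 1"
proof -
  define X where "X s = (exp s - 1) / k" for s
  define F where "F s = s / l1 + ln (1 + c * P / (1 + d * X s)) / ln (1 + c * P)" for s
  define S where "S = ln (1 + k * P)"
  define s where "s = ln (1 + k * x)"
  have L2_pos: "ln (1 + c * P) > 0"
    using mult_pos_pos[OF c P] by simp
  have S_pos: "S > 0"
    using mult_pos_pos[OF k P] by (simp add: S_def)
  have "convex_on {0..} F"
    unfolding F_def X_def using l1 L2_pos frontier_rate_convex[OF k c d P cond]
    by (intro convex_on_add convex_on_cdiv) (auto simp: convex_on_ident)
  hence "convex_on {0..S} F"
    by (rule convex_on_subset) auto
  moreover have s_range: "s \<in> {0..S}"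
    using k x by (auto simp: s_def S_def add_pos_nonneg)
  ultimately have chord: "F s \<le> (F S - F 0) / (S - 0) * (s - 0) + F 0"
    by (rule convex_onD_Icc')
  have F0: "F 0 = 1"
    using L2_pos by (simp add: F_def X_def)
  have "F S \<le> 1"
    using endpoint k P by (simp add: F_def X_def S_def add_pos_nonneg)
  hence "(F S - F 0) / (S - 0) * (s - 0) \<le> 0"
    using F0 S_pos s_range by (simp add: divide_nonpos_pos mult_nonpos_nonneg)
  with chord F0 have "F s \<le> 1"
    by simp
  moreover have "X s = x"
    using k x by (simp add: X_def s_def add_pos_nonneg)
  ultimately show ?thesis
    by (simp add: F_def s_def)
qed

section \<open>The rate region lies below the chord\<close>

lemma sinr_scale_mono:
  fixes a b p q t :: real
  assumes "a \<ge> 0" "b \<ge> 0" "p \<ge> 0" "q \<ge> 0" "t \<ge> 1"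
  shows "a * p / (1 + b * q) \<le> a * (t * p) / (1 + b * (t * q))"
proof -
  have "1 + b * q > 0" "1 + b * (t * q) > 0"
    using assms by (auto intro!: add_pos_nonneg)
  moreover have "a * p * 1 \<le> a * p * t"
    using assms by (intro mult_left_mono) auto
  ultimately show ?thesis
    by (simp add: divide_simps algebra_simps)
qed

text \<open>If P1 \<le> P2, scaling both powers so that P2 becomes P gives a frontier point that
  dominates both rates; the chord bound then applies.\<close>

lemma rate_bound_ordered:
  fixes a b c d P P1 P2 :: real
  assumes a: "a > 0" and b: "b > 0" and c: "c > 0" and d: "d > 0" and P: "P > 0"
    and cond: "(a / (1 + b * P)) * (1 + c * P) \<le> d * (2 + c * P)"
    and endpoint: "ln (1 + a * P / (1 + b * P)) / ln (1 + a * P)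
                   + ln (1 + c * P / (1 + d * P)) / ln (1 + c * P) \<le> 1"
    and powers: "0 \<le> P1" "P1 \<le> P2" "P2 \<le> P"
  shows "ln (1 + a * P1 / (1 + b * P2)) / ln (1 + a * P)
         + ln (1 + c * P2 / (1 + d * P1)) / ln (1 + c * P) \<le> 1"
proof (cases "P2 = 0")
  case True
  then show ?thesis using powers by simp
next
  case False
  define t where "t = P / P2"
  define x where "x = t * P1"
  have t: "t \<ge> 1" "t * P2 = P"
    using False powers by (simp_all add: t_def)
  have x: "0 \<le> x" "x \<le> P"
    using t powers unfolding x_def by (auto intro: order_trans[OF mult_left_mono])
  have rate1: "a * P1 / (1 + b * P2) \<le> a * x / (1 + b * P)"
    using sinr_scale_mono[of a b P1 P2 t] a b powers t by (simp add: x_def)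
  have "c * P2 * (1 + d * x) = c * P2 + c * d * P1 * (t * P2)"
    by (simp add: x_def algebra_simps)
  also have "\<dots> \<le> c * P + c * d * P1 * P"
    using c powers t by simp
  also have "\<dots> = c * P * (1 + d * P1)"
    by (simp add: algebra_simps)
  finally have "c * P2 * (1 + d * x) \<le> c * P * (1 + d * P1)" .
  hence rate2: "c * P2 / (1 + d * P1) \<le> c * P / (1 + d * x)"
    using d powers x by (simp add: divide_simps add_pos_nonneg)
  have "0 \<le> a * P1 / (1 + b * P2)" "0 \<le> c * P2 / (1 + d * P1)"
    using a b c d powers by (simp_all add: add_pos_nonneg)
  hence "ln (1 + a * P1 / (1 + b * P2)) \<le> ln (1 + (a / (1 + b * P)) * x)"
    and "ln (1 + c * P2 / (1 + d * P1)) \<le> ln (1 + c * P / (1 + d * x))"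
    using rate1 rate2 by simp_all
  moreover have "ln (1 + (a / (1 + b * P)) * x) / ln (1 + a * P)
                 + ln (1 + c * P / (1 + d * x)) / ln (1 + c * P) \<le> 1"
  proof (rule frontier_below_chord[OF _ c d P _ cond _ x])
    show "a / (1 + b * P) > 0" "ln (1 + a * P) > 0"
      using a b P by (simp_all add: add_pos_pos)
    show "ln (1 + (a / (1 + b * P)) * P) / ln (1 + a * P)
          + ln (1 + c * P / (1 + d * P)) / ln (1 + c * P) \<le> 1"
      using endpoint by simp
  qed
  moreover have "ln (1 + a * P) > 0" "ln (1 + c * P) > 0"
    using mult_pos_pos[OF a P] mult_pos_pos[OF c P] by simp_all
  ultimately show ?thesis
    using divide_right_mono[of "ln (1 + a * P1 / (1 + b * P2))"
            "ln (1 + (a / (1 + b * P)) * x)" "ln (1 + a * P)"]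
          divide_right_mono[of "ln (1 + c * P2 / (1 + d * P1))"
            "ln (1 + c * P / (1 + d * x))" "ln (1 + c * P)"]
    by linarith
qed

lemma rate_bound:
  fixes a b c d P P1 P2 :: real
  assumes a: "a > 0" and b: "b > 0" and c: "c > 0" and d: "d > 0" and P: "P > 0"
    and Q1: "Q1 a b c d P \<le> 0" and Q2: "Q2 a b c d P \<le> 0"
    and endpoint: "ln (1 + a * P / (1 + b * P)) / ln (1 + a * P)
                   + ln (1 + c * P / (1 + d * P)) / ln (1 + c * P) \<le> 1"
    and powers: "0 \<le> P1" "P1 \<le> P" "0 \<le> P2" "P2 \<le> P"
  shows "ln (1 + a * P1 / (1 + b * P2)) / ln (1 + a * P)
         + ln (1 + c * P2 / (1 + d * P1)) / ln (1 + c * P) \<le> 1"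
proof (cases "P1 \<le> P2")
  case True
  have "(a / (1 + b * P)) * (1 + c * P) \<le> d * (2 + c * P)"
    by (rule Q1_nonpos_imp_convexity_condition[OF a b c d P Q1])
  from rate_bound_ordered[OF a b c d P this endpoint] True powers show ?thesis
    by simp
next
  case False
  have "Q1 c d a b P \<le> 0"
    using Q2 by (simp only: Q2_eq_Q1_swapped)
  hence cond: "(c / (1 + d * P)) * (1 + a * P) \<le> b * (2 + a * P)"
    by (rule Q1_nonpos_imp_convexity_condition[OF c d a b P])
  have "ln (1 + c * P / (1 + d * P)) / ln (1 + c * P)
        + ln (1 + a * P / (1 + b * P)) / ln (1 + a * P) \<le> 1"
    using endpoint by linarith
  from rate_bound_ordered[OF c d a b P cond this, of P2 P1] False powers show ?thesis
    by simp
qed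

lemma below_line_in_triangle:
  fixes x y r1 r2 :: real
  assumes "x > 0" "y > 0" "0 \<le> r1" "0 \<le> r2" "r1 / x + r2 / y \<le> 1"
  shows "(r1, r2) \<in> convex hull {(0, 0), (0, y), (x, 0)}"
proof -
  define u v where "u = r1 / x" and "v = r2 / y"
  have "(r1, r2) = (1 - u - v) *\<^sub>R (0, 0) + v *\<^sub>R (0, y) + u *\<^sub>R (x, 0)"
    using assms by (simp add: u_def v_def)
  moreover have "0 \<le> u" "0 \<le> v" "(1 - u - v) + v + u = 1" "0 \<le> 1 - u - v"
    using assms by (simp_all add: u_def v_def)
  ultimately show ?thesis
    unfolding convex_hull_3 by blast
qed

lemma rate_region_in_triangle:
  fixes a b c d P :: real
  assumes a: "a > 0" and b: "b > 0" and c: "c > 0" and d: "d > 0" and P: "P > 0"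
    and Q1: "Q1 a b c d P \<le> 0" and Q2: "Q2 a b c d P \<le> 0"
    and endpoint: "ln (1 + a * P / (1 + b * P)) / ln (1 + a * P)
                   + ln (1 + c * P / (1 + d * P)) / ln (1 + c * P) \<le> 1"
  shows "rate_region a b c d P
         \<subseteq> convex hull {(0, 0), (0, log 2 (1 + c * P)), (log 2 (1 + a * P), 0)}"
proof
  fix z assume "z \<in> rate_region a b c d P"
  then obtain r1 r2 P1 P2 where z: "z = (r1, r2)" "0 \<le> r1" "0 \<le> r2"
    and powers: "0 \<le> P1" "P1 \<le> P" "0 \<le> P2" "P2 \<le> P"
    and rates: "r1 \<le> R1 a b c d P1 P2" "r2 \<le> R2 a b c d P1 P2"
    unfolding rate_region_def by blast
  have "R1 a b c d P1 P2 / log 2 (1 + a * P) + R2 a b c d P1 P2 / log 2 (1 + c * P) \<le> 1"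
    using rate_bound[OF a b c d P Q1 Q2 endpoint powers]
    by (simp add: R1_def R2_def log_def)
  moreover have log_pos: "log 2 (1 + a * P) > 0" "log 2 (1 + c * P) > 0"
    using mult_pos_pos[OF a P] mult_pos_pos[OF c P] by simp_all
  ultimately have "r1 / log 2 (1 + a * P) + r2 / log 2 (1 + c * P) \<le> 1"
    using rates by (smt (verit) divide_right_mono)
  then show "z \<in> convex hull {(0, 0), (0, log 2 (1 + c * P)), (log 2 (1 + a * P), 0)}"
    using z log_pos by (simp add: below_line_in_triangle)
qed

lemma rate_region_memI:
  assumes "0 \<le> r1" "0 \<le> r2" "0 \<le> P1" "P1 \<le> P" "0 \<le> P2" "P2 \<le> P"
    and "r1 \<le> R1 a b c d P1 P2" "r2 \<le> R2 a b c d P1 P2"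
  shows "(r1, r2) \<in> rate_region a b c d P"
  unfolding rate_region_def using assms by blast

lemma tdm_vertices_in_rate_region:
  fixes a b c d P :: real
  assumes a: "a > 0" and c: "c > 0" and P: "P > 0"
  shows "{(0, 0), (0, log 2 (1 + c * P)), (log 2 (1 + a * P), 0)} \<subseteq> rate_region a b c d P"
proof -
  have "0 \<le> log 2 (1 + a * P)" "0 \<le> log 2 (1 + c * P)"
    using mult_pos_pos[OF a P] mult_pos_pos[OF c P] by simp_all
  moreover have "(0, 0) \<in> rate_region a b c d P"
    using P by (intro rate_region_memI[of _ _ 0 _ 0]) (simp_all add: R1_def R2_def)
  ultimately show ?thesis
    using P by (auto intro: rate_region_memI[of _ _ 0 _ P] rate_region_memI[of _ _ P _ 0]
                     simp: R1_def R2_def)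
qed

lemma corner_condition_iff:
  fixes a b c d P :: real
  assumes a: "a > 0" and b: "b > 0" and c: "c > 0" and d: "d > 0" and P: "P > 0"
  shows "((1 + c * P) * (1 + d * P) / (1 + c * P + d * P)
            \<ge> ((1 + a * P + b * P) / (1 + b * P)) powr (log 2 (1 + c * P) / log 2 (1 + a * P)))
         \<longleftrightarrow> ln (1 + a * P / (1 + b * P)) / ln (1 + a * P)
             + ln (1 + c * P / (1 + d * P)) / ln (1 + c * P) \<le> 1"
proof -
  define L1 L2 where "L1 = ln (1 + a * P)" and "L2 = ln (1 + c * P)"
  define Y where "Y = 1 + a * P / (1 + b * P)"
  define r2 where "r2 = ln (1 + c * P / (1 + d * P))"
  have pos: "1 + b * P > 0" "1 + d * P > 0" "1 + c * P > 0" "1 + c * P / (1 + d * P) > 0"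
    using assms by (simp_all add: add_pos_pos)
  have L_pos: "L1 > 0" "L2 > 0"
    using mult_pos_pos[OF a P] mult_pos_pos[OF c P] by (simp_all add: L1_def L2_def)
  have Y_pos: "Y > 0"
    using a P pos by (simp add: Y_def add_pos_pos)
  have lhs: "(1 + c * P) * (1 + d * P) / (1 + c * P + d * P) = (1 + c * P) / (1 + c * P / (1 + d * P))"
    and base: "(1 + a * P + b * P) / (1 + b * P) = Y"
    using pos by (simp_all add: Y_def field_simps)
  have "log 2 (1 + c * P) / log 2 (1 + a * P) = L2 / L1"
    by (simp add: log_def L1_def L2_def)
  moreover have "(Y powr (L2 / L1) \<le> (1 + c * P) / (1 + c * P / (1 + d * P)))
                 \<longleftrightarrow> (L2 / L1) * ln Y \<le> L2 - r2"
    using Y_pos pos by (simp add: ln_powr ln_div L2_def r2_def flip: ln_le_cancel_iff)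
  moreover have "\<dots> \<longleftrightarrow> ln Y / L1 + r2 / L2 \<le> 1"
    using L_pos by (simp add: field_simps)
  ultimately show ?thesis
    by (simp add: lhs base Y_def r2_def L1_def L2_def)
qed

theorem lemma2:
  fixes a b c d Pmax :: real
  assumes "a > 0" "b > 0" "c > 0" "d > 0" "Pmax > 0"
    and "Q1 a b c d Pmax \<le> 0" "Q2 a b c d Pmax \<le> 0"
  defines "A \<equiv> (0::real, log 2 (1 + c * Pmax))"
    and "C \<equiv> (log 2 (1 + a * Pmax), 0::real)"
    and "\<gamma> \<equiv> log 2 (1 + c * Pmax) / log 2 (1 + a * Pmax)"
    and "B \<equiv> (R1 a b c d Pmax Pmax, R2 a b c d Pmax Pmax)"
  shows "((1 + c * Pmax) * (1 + d * Pmax) / (1 + c * Pmax + d * Pmax)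
            \<ge> ((1 + a * Pmax + b * Pmax) / (1 + b * Pmax)) powr \<gamma>
          \<longrightarrow> convex hull (rate_region a b c d Pmax) = convex hull {(0, 0), A, C})
       \<and> (((1 + c * Pmax) * (1 + d * Pmax) / (1 + c * Pmax + d * Pmax)
            \<ge> ((1 + a * Pmax + b * Pmax) / (1 + b * Pmax)) powr \<gamma>)
          \<longleftrightarrow> fst B / fst C + snd B / snd A \<le> 1)"
proof -
  note corner = corner_condition_iff[OF assms(1-5), folded \<gamma>_def]
  have B_ratio: "fst B / fst C + snd B / snd A
      = ln (1 + a * Pmax / (1 + b * Pmax)) / ln (1 + a * Pmax)
        + ln (1 + c * Pmax / (1 + d * Pmax)) / ln (1 + c * Pmax)"
    by (simp add: A_def B_def C_def R1_def R2_def log_def)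
  have "convex hull (rate_region a b c d Pmax) = convex hull {(0, 0), A, C}"
    if "ln (1 + a * Pmax / (1 + b * Pmax)) / ln (1 + a * Pmax)
        + ln (1 + c * Pmax / (1 + d * Pmax)) / ln (1 + c * Pmax) \<le> 1"
  proof
    show "convex hull (rate_region a b c d Pmax) \<subseteq> convex hull {(0, 0), A, C}"
      using rate_region_in_triangle[OF assms(1-7) that]
      by (intro hull_minimal) (auto simp: A_def C_def)
    show "convex hull {(0, 0), A, C} \<subseteq> convex hull (rate_region a b c d Pmax)"
      using tdm_vertices_in_rate_region[OF assms(1,3,5), of b d]
      by (intro hull_mono) (simp add: A_def C_def)
  qed
  with corner B_ratio show ?thesis
    by simp
qed

end
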